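(* VD and BC satisfy ballot monotonicity. For each $f\in\{\mathrm{MF},\mathrm{MS},\mathrm{FT}\}$ ballot monotonicity fails: there exist a finite candidate set $C$, a profile $P$, an axis $\triangleleft\in f(P)$ and a ballot $A\in P$ that is not an interval of $\triangleleft$ such that $\triangleleft\notin f(P')$, where $P'$ is obtained from $P$ by replacing (one copy of) $A$ with $A'=\{x\in C:\exists y,z\in A,\ y\trianglelefteq x\trianglelefteq z\}$.
   Context: Let $C$ be a finite set of candidates. An approval ballot is a nonempty subset $A\subseteq C$; a profile is a finite sequence of ballots. An axis is a strict linear order $\triangleleft$ on $C$; $a\trianglelefteq b$ means $a\triangleleft b$ or $a=b$. A ballot $A$ is an interval of $\triangleleft$ if for all $a,b\in A$ and every $c$ with $a\triangleleft c\triangleleft b$ we have $c\in A$. An axis rule $f$ satisfies ballot monotonicity if for every profile $P$, every ballot $A\in P$ and every axis $\triangleleft\in f(P)$ such that $A$ is not an interval of $\triangleleft$, we have $\triangleleft\in f(P')$, where $P'$ is obtained from $P$ by replacing $A$ by $A'=\{x\in C:\exists y,z\in A \text{ with } y\trianglelefteq x\trianglelefteq z\}$. For a cost function $\mathrm{cost}_f$, the scoring rule returns $f(P)=\arg\min_{\triangleleft}\sum_{A\in P}\mathrm{cost}_f(A,\triangleleft)$ over all axes on $C$. The five rules are the scoring rules with costs: $\mathrm{cost}_{\mathrm{VD}}(A,\triangleleft)=0$ if $A$ is an interval of $\triangleleft$ and $1$ otherwise; $\mathrm{cost}_{\mathrm{MF}}(A,\triangleleft)=\min_{x,y\in A,\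 x\trianglelefteq y}\big(|\{z\in A: z\triangleleft x \text{ or } y\triangleleft z\}|+|\{z\notin A: x\triangleleft z\triangleleft y\}|\big)$; $\mathrm{cost}_{\mathrm{BC}}(A,\triangleleft)=|\{b\notin A: a\triangleleft b\triangleleft c \text{ for some } a,c\in A\}|$; $\mathrm{cost}_{\mathrm{MS}}(A,\triangleleft)=\sum_{x\in C\setminus A}\min\big(|\{y\in A:y\triangleleft x\}|,\,|\{y\in A:x\triangleleft y\}|\big)$; $\mathrm{cost}_{\mathrm{FT}}(A,\triangleleft)=\sum_{x\in C\setminus A}|\{y\in A:y\triangleleft x\}|\cdot|\{y\in A:x\triangleleft y\}|$. *)

theory Defs
  imports Main
begin

definition is_axis :: "'a set \<Rightarrow> 'a rel \<Rightarrow> bool" where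
  "is_axis C r \<longleftrightarrow> r \<subseteq> C \<times> C \<and> strict_linear_order_on C r"

definition axes :: "'a set \<Rightarrow> 'a rel set" where
  "axes C = {r. is_axis C r}"

definition axle :: "'a rel \<Rightarrow> 'a \<Rightarrow> 'a \<Rightarrow> bool" where
  "axle r a b \<longleftrightarrow> (a, b) \<in> r \<or> a = b"

definition is_interval :: "'a rel \<Rightarrow> 'a set \<Rightarrow> bool" where
  "is_interval r A \<longleftrightarrow> (\<forall>a\<in>A. \<forall>b\<in>A. \<forall>c. (a, c) \<in> r \<and> (c, b) \<in> r \<longrightarrow> c \<in> A)"

definition interval_hull :: "'a set \<Rightarrow> 'a rel \<Rightarrow> 'a set \<Rightarrow> 'a set" where
  "interval_hull C r A = {x \<in> C. \<exists>y\<in>A. \<exists>z\<in>A. axle r y x \<and> axle r x z}"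

definition is_profile :: "'a set \<Rightarrow> 'a set list \<Rightarrow> bool" where
  "is_profile C P \<longleftrightarrow> (\<forall>A\<in>set P. A \<noteq> {} \<and> A \<subseteq> C)"

type_synonym 'a cost = "'a set \<Rightarrow> 'a set \<Rightarrow> 'a rel \<Rightarrow> nat"  (* C, ballot A, axis *)
type_synonym 'a axis_rule = "'a set \<Rightarrow> 'a set list \<Rightarrow> 'a rel set"

definition total_cost :: "'a cost \<Rightarrow> 'a set \<Rightarrow> 'a set list \<Rightarrow> 'a rel \<Rightarrow> nat" where
  "total_cost c C P r = sum_list (map (\<lambda>A. c C A r) P)"

definition scoring_rule :: "'a cost \<Rightarrow> 'a axis_rule" where
  "scoring_rule c C P = {r \<in> axes C. \<forall>r'\<in>axes C. total_cost c C P r \<le> total_cost c C P r'}"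

definition cost_VD :: "'a cost" where
  "cost_VD C A r = (if is_interval r A then 0 else 1)"

definition cost_MF :: "'a cost" where
  "cost_MF C A r = Min ((\<lambda>(x, y). card {z \<in> A. (z, x) \<in> r \<or> (y, z) \<in> r}
                                  + card {z \<in> C - A. (x, z) \<in> r \<and> (z, y) \<in> r})
                        ` {(x, y). x \<in> A \<and> y \<in> A \<and> axle r x y})"

definition cost_BC :: "'a cost" where
  "cost_BC C A r = card {b \<in> C - A. \<exists>a\<in>A. \<exists>c\<in>A. (a, b) \<in> r \<and> (b, c) \<in> r}"

definition cost_MS :: "'a cost" where
  "cost_MS C A r = (\<Sum>x\<in>C - A. min (card {y \<in> A. (y, x) \<in> r}) (card {y \<in> A. (x, y) \<in> r}))"

definition cost_FT :: "'a cost" where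
  "cost_FT C A r = (\<Sum>x\<in>C - A. card {y \<in> A. (y, x) \<in> r} * card {y \<in> A. (x, y) \<in> r})"

definition ballot_monotone :: "'a axis_rule \<Rightarrow> bool" where
  "ballot_monotone f \<longleftrightarrow>
     (\<forall>C P i r. finite C \<and> is_profile C P \<and> i < length P \<and> r \<in> f C P \<and> \<not> is_interval r (P ! i)
        \<longrightarrow> r \<in> f C (P[i := interval_hull C r (P ! i)]))"

end

theory Submission imports Defs "HOL-Combinatorics.Multiset_Permutations" begin

(*
  Replacing a ballot A by its hull A' changes the total cost of an axis r' by
  c(A', r') - c(A, r'); for the axis r itself A' is an interval, so the change is
  -c(A, r). Hence r stays optimal as soon as c vanishes on intervals and
  c(A, r') <= c(A', r') + c(A, r). This is immediate for VD (the cost is at most 1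
  and c(A, r) = 1). For BC, every gap of A under r' is a gap of A' under r' or lies
  in A' - A, and A' - A is exactly the set of gaps of A under r.

  For MF, MS and FT the failure is witnessed by profiles on five candidates; optimality
  of the axis is checked by evaluating the total cost on all 120 axes.
*)

lemma total_cost_list_update:
  "i < length P \<Longrightarrow> total_cost c C (P[i := X]) r + c C (P ! i) r = total_cost c C P r + c C X r"
proof (induction P arbitrary: i)
  case Nil
  then show ?case by simp
next
  case (Cons A P)
  then show ?case by (cases i) (auto simp: total_cost_def)
qed

lemma axesD:
  assumes "r \<in> axes C"
  shows "r \<subseteq> C \<times> C" "trans r" "irrefl r" "total_on C r"
  using assms by (auto simp: axes_def is_axis_def strict_linear_order_on_def)

lemma is_interval_interval_hull:
  assumes "r \<in> axes C"
  shows "is_interval r (interval_hull C r A)"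
  unfolding is_interval_def
proof (intro ballI allI impI)
  fix a b c
  assume a: "a \<in> interval_hull C r A" and b: "b \<in> interval_hull C r A"
    and c: "(a, c) \<in> r \<and> (c, b) \<in> r"
  from a obtain y where "y \<in> A" "axle r y a" by (auto simp: interval_hull_def)
  moreover from b obtain z where "z \<in> A" "axle r b z" by (auto simp: interval_hull_def)
  moreover have "c \<in> C"
    using c axesD(1)[OF assms] by blast
  ultimately show "c \<in> interval_hull C r A"
    using c axesD(2)[OF assms] unfolding interval_hull_def axle_def by (blast dest: transD)
qed

lemma interval_hull_eq_self:
  assumes "A \<subseteq> C" "is_interval r A"
  shows "interval_hull C r A = A"
proof
  show "interval_hull C r A \<subseteq> A"
    using assms(2) unfolding interval_hull_def axle_def is_interval_def by blast
  show "A \<subseteq> interval_hull C r A"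
    using assms(1) unfolding interval_hull_def axle_def by blast
qed

lemma ballot_monotone_scoring_ruleI:
  assumes interval_cost: "\<And>C A r. is_interval r A \<Longrightarrow> c C A r = 0"
    and hull_cost: "\<And>C A r r'. finite C \<Longrightarrow> A \<subseteq> C \<Longrightarrow> r \<in> axes C \<Longrightarrow> r' \<in> axes C
      \<Longrightarrow> \<not> is_interval r A \<Longrightarrow> c C A r' \<le> c C (interval_hull C r A) r' + c C A r"
  shows "ballot_monotone (scoring_rule c)"
  unfolding ballot_monotone_def
proof (intro allI impI)
  fix C P i r
  assume "finite C \<and> is_profile C P \<and> i < length P \<and> r \<in> scoring_rule c C P \<and> \<not> is_interval r (P ! i)"
  then have C: "finite C" and A: "P ! i \<subseteq> C" and i: "i < length P" and r: "r \<in> axes C"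
    and opt: "\<And>r'. r' \<in> axes C \<Longrightarrow> total_cost c C P r \<le> total_cost c C P r'"
    and not_interval: "\<not> is_interval r (P ! i)"
    by (auto simp: scoring_rule_def is_profile_def)
  let ?H = "interval_hull C r (P ! i)"
  have H: "c C ?H r = 0"
    using interval_cost is_interval_interval_hull[OF r] by blast
  show "r \<in> scoring_rule c C (P[i := ?H])"
    unfolding scoring_rule_def
  proof (intro CollectI conjI ballI r)
    fix r' assume r': "r' \<in> axes C"
    show "total_cost c C (P[i := ?H]) r \<le> total_cost c C (P[i := ?H]) r'"
      using total_cost_list_update[OF i, of c C ?H r] total_cost_list_update[OF i, of c C ?H r']
        opt[OF r'] hull_cost[OF C A r r' not_interval] H by linarith
  qed
qed

lemma ballot_monotone_VD: "ballot_monotone (scoring_rule cost_VD)"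
  by (rule ballot_monotone_scoring_ruleI) (simp_all add: cost_VD_def)

lemma cost_BC_interval:
  assumes "is_interval r A"
  shows "cost_BC C A r = 0"
proof -
  have "{b \<in> C - A. \<exists>a\<in>A. \<exists>c\<in>A. (a, b) \<in> r \<and> (b, c) \<in> r} = {}"
    using assms unfolding is_interval_def by blast
  then show ?thesis
    unfolding cost_BC_def by (simp only: card.empty)
qed

lemma cost_BC_le_hull:
  assumes C: "finite C" and A: "A \<subseteq> C"
  shows "cost_BC C A r' \<le> cost_BC C (interval_hull C r A) r' + cost_BC C A r"
proof -
  let ?H = "interval_hull C r A"
  let ?gaps = "\<lambda>X s. {b \<in> C - X. \<exists>a\<in>X. \<exists>c\<in>X. (a, b) \<in> s \<and> (b, c) \<in> s}"
  have "A \<subseteq> ?H"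
    using A by (auto simp: interval_hull_def axle_def)
  then have "?gaps A r' \<subseteq> ?gaps ?H r' \<union> (?H - A)"
    by blast
  then have "card (?gaps A r') \<le> card (?gaps ?H r' \<union> (?H - A))"
    using C by (intro card_mono) (auto simp: interval_hull_def)
  also have "\<dots> \<le> card (?gaps ?H r') + card (?H - A)"
    by (rule card_Un_le)
  also have "card (?H - A) \<le> card (?gaps A r)"
    using C by (intro card_mono) (auto simp: interval_hull_def axle_def)
  finally show ?thesis
    by (simp add: cost_BC_def)
qed

lemma ballot_monotone_BC: "ballot_monotone (scoring_rule cost_BC)"
  by (rule ballot_monotone_scoring_ruleI) (simp_all add: cost_BC_interval cost_BC_le_hull)

(* The axis listing xs from left to right, built as a list so that it can be evaluated. *)
definition axis_of_list :: "'a list \<Rightarrow> 'a rel" where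
  "axis_of_list xs =
     set (concat (map (\<lambda>i. map (\<lambda>j. (xs ! i, xs ! j)) [Suc i..<length xs]) [0..<length xs]))"

lemma mem_axis_of_list_iff:
  "(a, b) \<in> axis_of_list xs \<longleftrightarrow> (\<exists>i j. i < j \<and> j < length xs \<and> a = xs ! i \<and> b = xs ! j)"
  unfolding axis_of_list_def by (auto simp: Suc_le_eq) (auto intro!: bexI imageI)

lemma axis_of_list_in_axes:
  assumes "distinct xs"
  shows "axis_of_list xs \<in> axes (set xs)"
proof -
  have "axis_of_list xs \<subseteq> set xs \<times> set xs"
    by (auto simp: mem_axis_of_list_iff)
  moreover have "trans (axis_of_list xs)"
    unfolding trans_def mem_axis_of_list_iff
    using assms by (metis nth_eq_iff_index_eq order.strict_trans)
  moreover have "irrefl (axis_of_list xs)"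
    unfolding irrefl_def mem_axis_of_list_iff
    using assms by (metis less_imp_neq nth_eq_iff_index_eq order.strict_trans)
  moreover have "total_on (set xs) (axis_of_list xs)"
    unfolding total_on_def mem_axis_of_list_iff
    by (metis in_set_conv_nth linorder_neqE_nat)
  ultimately show ?thesis
    by (simp add: axes_def is_axis_def strict_linear_order_on_def)
qed

lemma strict_linear_order_on_sorted_list:
  assumes "finite C" "strict_linear_order_on C r"
  shows "\<exists>xs. set xs = C \<and> distinct xs \<and> sorted_wrt (\<lambda>a b. (a, b) \<in> r) xs"
  using assms
proof (induction C rule: finite_induct)
  case empty
  then show ?case by simp
next
  case (insert x F)
  have trans: "trans r" and irrefl: "irrefl r" and total: "total_on (insert x F) r"
    using insert.prems by (auto simp: strict_linear_order_on_def)
  then obtain ys where ys: "set ys = F" "distinct ys" "sorted_wrt (\<lambda>a b. (a, b) \<in> r) ys"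
    using insert.IH by (auto simp: strict_linear_order_on_def total_on_def)
  define xs where "xs = filter (\<lambda>y. (y, x) \<in> r) ys @ x # filter (\<lambda>y. (x, y) \<in> r) ys"
  have "set xs = insert x F"
    using ys total insert.hyps(2) by (auto simp: xs_def total_on_def)
  moreover have "distinct xs"
    using ys trans irrefl by (auto simp: xs_def irrefl_def dest: transD)
  moreover have "sorted_wrt (\<lambda>a b. (a, b) \<in> r) xs"
    using ys(3) trans by (auto simp: xs_def sorted_wrt_append sorted_wrt_filter dest: transD)
  ultimately show ?case by blast
qed

lemma axes_eq_axis_of_list:
  assumes "finite C" "r \<in> axes C"
  shows "\<exists>xs\<in>permutations_of_set C. r = axis_of_list xs"
proof -
  note r = axesD[OF assms(2)]
  obtain xs where xs: "set xs = C" "distinct xs" "sorted_wrt (\<lambda>a b. (a, b) \<in> r) xs"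
    using strict_linear_order_on_sorted_list[OF assms(1)] r(2-4)
    by (auto simp: strict_linear_order_on_def)
  have "(a, b) \<in> axis_of_list xs" if ab: "(a, b) \<in> r" for a b
  proof -
    have "a \<in> set xs" "b \<in> set xs"
      using ab r(1) xs(1) by auto
    then obtain i j where ij: "i < length xs" "j < length xs" "a = xs ! i" "b = xs ! j"
      by (metis in_set_conv_nth)
    have "i < j"
    proof (rule ccontr)
      assume "\<not> i < j"
      then have "(b, a) \<in> r \<or> a = b"
        using xs(3) ij by (cases "i = j") (auto simp: sorted_wrt_iff_nth_less)
      then show False
        using ab r(2,3) by (meson irrefl_def transD)
    qed
    then show ?thesis
      using ij by (auto simp: mem_axis_of_list_iff)
  qed
  moreover have "axis_of_list xs \<subseteq> r"
    using xs(3) by (auto simp: mem_axis_of_list_iff sorted_wrt_iff_nth_less)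
  ultimately have "r = axis_of_list xs"
    by auto
  then show ?thesis
    using xs by (auto intro: permutations_of_setI)
qed

lemma not_ballot_monotone_scoring_ruleI:
  assumes profile: "is_profile C P" and i: "i < length P"
    and xs: "xs \<in> permutations_of_set C"
    and hull_ne: "interval_hull C (axis_of_list xs) (P ! i) \<noteq> P ! i"
    and optimal: "\<forall>ys\<in>permutations_of_set C.
      total_cost c C P (axis_of_list xs) \<le> total_cost c C P (axis_of_list ys)"
    and zs: "zs \<in> permutations_of_set C"
    and improves: "total_cost c C (P[i := interval_hull C (axis_of_list xs) (P ! i)]) (axis_of_list zs)
      < total_cost c C (P[i := interval_hull C (axis_of_list xs) (P ! i)]) (axis_of_list xs)"
  shows "\<not> ballot_monotone (scoring_rule c)"
proof
  assume monotone: "ballot_monotone (scoring_rule c)"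
  have C: "finite C"
    using xs by (auto simp: permutations_of_set_def)
  have in_axes: "axis_of_list ys \<in> axes C" if "ys \<in> permutations_of_set C" for ys
    using axis_of_list_in_axes that by (fastforce simp: permutations_of_set_def)
  have "axis_of_list xs \<in> scoring_rule c C P"
    using in_axes[OF xs] optimal axes_eq_axis_of_list[OF C]
    by (auto simp: scoring_rule_def)
  moreover have "\<not> is_interval (axis_of_list xs) (P ! i)"
    using profile i hull_ne interval_hull_eq_self by (metis is_profile_def nth_mem)
  ultimately have "axis_of_list xs \<in> scoring_rule c C (P[i := interval_hull C (axis_of_list xs) (P ! i)])"
    using monotone C profile i unfolding ballot_monotone_def by blast
  then show False
    using in_axes[OF zs] improves unfolding scoring_rule_def by force
qed

(* The pair comprehension in cost_MF is not executable; restated over A \<times> A for evaluation. *)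
lemma cost_MF_code [code]:
  "cost_MF C A r = Min ((\<lambda>(x, y). card {z \<in> A. (z, x) \<in> r \<or> (y, z) \<in> r}
                                  + card {z \<in> C - A. (x, z) \<in> r \<and> (z, y) \<in> r})
                        ` Set.filter (\<lambda>(x, y). axle r x y) (A \<times> A))"
  unfolding cost_MF_def Set.filter_eq by (intro arg_cong[where f=Min] image_cong) auto

lemma not_ballot_monotone_MF: "\<not> ballot_monotone (scoring_rule (cost_MF :: nat cost))"
  by (rule not_ballot_monotone_scoring_ruleI[where C="{0..4}" and i=2
        and P="[{0,1}, {2,3}, {0,2,4}, {1,3,4}]" and xs="[0,1,3,2,4]" and zs="[0,1,4,3,2]"])
    code_simp+

lemma not_ballot_monotone_MS: "\<not> ballot_monotone (scoring_rule (cost_MS :: nat cost))"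
  by (rule not_ballot_monotone_scoring_ruleI[where C="{0..4}" and i=2
        and P="[{0,1,2}, {0,3,4}, {1,2,3,4}]" and xs="[1,0,2,3,4]" and zs="[1,2,0,3,4]"])
    code_simp+

lemma not_ballot_monotone_FT: "\<not> ballot_monotone (scoring_rule (cost_FT :: nat cost))"
  by (rule not_ballot_monotone_scoring_ruleI[where C="{0..4}" and i=3
        and P="[{0,1}, {0,2}, {0,3,4}, {1,2,3,4}]" and xs="[1,0,2,3,4]" and zs="[1,2,0,3,4]"])
    code_simp+

theorem mainTheorem6:
  shows "ballot_monotone (scoring_rule (cost_VD :: 'a cost))
       \<and> ballot_monotone (scoring_rule (cost_BC :: 'a cost))
       \<and> \<not> ballot_monotone (scoring_rule (cost_MF :: nat cost))
       \<and> \<not> ballot_monotone (scoring_rule (cost_MS :: nat cost))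
       \<and> \<not> ballot_monotone (scoring_rule (cost_FT :: nat cost))"
  using ballot_monotone_VD ballot_monotone_BC
    not_ballot_monotone_MF not_ballot_monotone_MS not_ballot_monotone_FT
  by blast

end
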